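(* Let $\mathcal{H}$ be a Hilbert space and $n\in\mathbb{N}$. Suppose bounded operators on $\mathcal{H}$ satisfy Assumptions 1–4 of the context, and let $K,L_i,S_{ij}$ be defined as in the context. Then $$K+K^\dagger=-L_i^\dagger L_i,\qquad S_{il}S_{jl}^\dagger=\delta_{ij}P_0,\qquad S_{li}^\dagger S_{lj}=\delta_{ij}P_0$$ for all $i,j\in\{1,\dots,n\}$.
   Context: Repeated indices not inside parentheses are summed over $\{1,\dots,n\}$; $\dagger$ denotes the adjoint; all operators are bounded on $\mathcal{H}$. Assumption 1: for each $k\ge0$, $K^{(k)}+K^{(k)\dagger}=-L^{(k)\dagger}_iL^{(k)}_i$, $S^{(k)}_{il}S^{(k)\dagger}_{jl}=\delta_{ij}I$, $S^{(k)\dagger}_{li}S^{(k)}_{lj}=\delta_{ij}I$. Assumption 2: there are bounded operators $Y,A,B,F_i,G_i,W_{ij}$, independent of $k$, with $K^{(k)}=k^2Y+kA+B$, $L^{(k)}_i=kF_i+G_i$, $S^{(k)}_{ij}=W_{ij}$ for all $k\ge0$. Let $P_0$ be the orthogonal projection onto $\mathrm{Ker}(Y)$ and $P_1=I-P_0$. Assumption 3: there is a bounded operator $Y_1^{-1}$ on $\mathcal{H}$ with $P_1Y_1^{-1}=Y_1^{-1}P_1$, such that $YY_1^{-1}P_1ZP_0=P_1ZP_0$ for $Z\in\{A\}\cup\{F_i^\dagger W_{ij}:j=1,\dots,n\}$, and $P_0XP_1Y_1^{-1}Y=P_0XP_1$ for every $X$ among $A,B,F_i,G_i,W_{ij},G_i^\dagger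 W_{ij},F_iY_1^{-1}F_j,F_iY_1^{-1}A,F_iY_1^{-1}F_l^\dagger W_{lj},AY_1^{-1}A,AY_1^{-1}F_i,AY_1^{-1}F_l^\dagger W_{lj}$; moreover $P_0YP_1=0$, $P_0AP_0=0$, $F_iP_0=0$ and $P_0(\delta_{il}+F_iY_1^{-1}F_l^\dagger)W_{lj}P_1=0$ for all $i,j$. Define $K=P_0(B-AY_1^{-1}A)P_0$, $L_i=(G_i-F_iY_1^{-1}A)P_0$, $S_{ij}=(\delta_{il}+F_iY_1^{-1}F_l^\dagger)W_{lj}P_0$. Assumption 4: $P_1L_i=0$ and $P_1S_{ij}=0$ for all $i,j$. *)

theory Defs
  imports "HOL-Analysis.Analysis" "HOL-Library.Function_Algebras"
begin

class complex_vector = real_vector +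
  fixes scaleC :: "complex \<Rightarrow> 'a \<Rightarrow> 'a" (infixr \<open>*\<^sub>C\<close> 75)
  assumes scaleC_add_right: "a *\<^sub>C (x + y) = a *\<^sub>C x + a *\<^sub>C y"
    and scaleC_add_left: "(a + b) *\<^sub>C x = a *\<^sub>C x + b *\<^sub>C x"
    and scaleC_scaleC: "a *\<^sub>C (b *\<^sub>C x) = (a * b) *\<^sub>C x"
    and scaleC_one: "1 *\<^sub>C x = x"
    and scaleR_scaleC: "scaleR r x = (complex_of_real r) *\<^sub>C x"

class complex_inner = complex_vector + real_normed_vector +
  fixes cinner :: "'a \<Rightarrow> 'a \<Rightarrow> complex"
  assumes cinner_commute: "cinner x y = cnj (cinner y x)"
    and cinner_add_left: "cinner (x + y) z = cinner x z + cinner y z"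
    and cinner_scaleC_left: "cinner (r *\<^sub>C x) y = cnj r * cinner x y"
    and cinner_ge_zero: "Im (cinner x x) = 0 \<and> 0 \<le> Re (cinner x x)"
    and cinner_eq_zero_iff: "cinner x x = 0 \<longleftrightarrow> x = 0"
    and norm_eq_sqrt_cinner: "norm x = sqrt (Re (cinner x x))"

class chilbert_space = complex_inner + complete_space

text \<open>Operators are functions on the space; sums/differences/zero of operators are
  pointwise (Function_Algebras), products are compositions, the identity is id.\<close>

definition clinear :: "('a::complex_vector \<Rightarrow> 'b::complex_vector) \<Rightarrow> bool" where
  "clinear T \<longleftrightarrow> (\<forall>x y. T (x + y) = T x + T y) \<and> (\<forall>c x. T (c *\<^sub>C x) = c *\<^sub>C T x)"

definition bounded_op :: "('a::chilbert_space \<Rightarrow> 'a) \<Rightarrow> bool" where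
  "bounded_op T \<longleftrightarrow> clinear T \<and> (\<exists>C. \<forall>x. norm (T x) \<le> norm x * C)"

definition adj :: "('a::chilbert_space \<Rightarrow> 'a) \<Rightarrow> ('a \<Rightarrow> 'a)" where
  "adj T = (THE S. \<forall>x y. cinner (T x) y = cinner x (S y))"

definition opker :: "('a::chilbert_space \<Rightarrow> 'a) \<Rightarrow> 'a set" where
  "opker T = {x. T x = 0}"

definition is_orth_proj :: "('a::chilbert_space \<Rightarrow> 'a) \<Rightarrow> 'a set \<Rightarrow> bool" where
  "is_orth_proj P M \<longleftrightarrow> (\<forall>x. P x \<in> M \<and> (\<forall>m\<in>M. cinner m (x - P x) = 0))"

definition opscale :: "complex \<Rightarrow> ('a::complex_vector \<Rightarrow> 'a) \<Rightarrow> ('a \<Rightarrow> 'a)" where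
  "opscale c T = (\<lambda>x. c *\<^sub>C T x)"

definition kdelta :: "nat \<Rightarrow> nat \<Rightarrow> ('a::complex_vector \<Rightarrow> 'a) \<Rightarrow> ('a \<Rightarrow> 'a)" where
  "kdelta i j T = (if i = j then T else 0)"

end

theory Submission
  imports Defs
begin

text \<open>By Assumption 2, Assumption 1 is a polynomial identity in \<open>k \<ge> 0\<close>, so its coefficients
  vanish separately: \<open>Y + Y\<dagger> = -F\<^sub>i\<dagger>F\<^sub>i\<close>, \<open>A + A\<dagger> = -(F\<^sub>i\<dagger>G\<^sub>i + G\<^sub>i\<dagger>F\<^sub>i)\<close>,
  \<open>B + B\<dagger> = -G\<^sub>i\<dagger>G\<^sub>i\<close>, and \<open>W\<close> is unitary. Operators with an adjoint form a \<open>*\<close>-algebra under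
  composition, and there the three claims become ring identities: expanding them, every term
  that does not match is killed by \<open>F\<^sub>i P\<^sub>0 = 0\<close>, or is a term \<open>Y + Y\<dagger>\<close> sandwiched between
  vectors on which Assumption 3 lets \<open>Y Y\<^sub>1\<^sup>-\<^sup>1\<close> act as the identity, where it cancels the
  remaining cross terms.\<close>

section \<open>Complex inner product spaces\<close>

context complex_inner
begin

lemma cnj_cinner [simp]: "cnj (cinner x y) = cinner y x"
  by (simp add: cinner_commute[of y x])

lemma cinner_add_right: "cinner x (y + z) = cinner x y + cinner x z"
  using cinner_commute[of x "y + z"] by (simp add: cinner_add_left)

lemma cinner_scaleC_right: "cinner x (r *\<^sub>C y) = r * cinner x y"
  using cinner_commute[of x "r *\<^sub>C y"] by (simp add: cinner_scaleC_left)

lemma cinner_zero_left [simp]: "cinner 0 y = 0"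
  using cinner_add_left[of 0 0 y] by simp

lemma cinner_zero_right [simp]: "cinner x 0 = 0"
  using cinner_add_right[of x 0 0] by simp

lemma cinner_minus_left: "cinner (- x) y = - cinner x y"
proof -
  have "cinner x y + cinner (- x) y = 0"
    using cinner_add_left[of x "- x" y] by simp
  then show ?thesis
    by (metis group_add_class.minus_unique)
qed

lemma cinner_minus_right: "cinner x (- y) = - cinner x y"
proof -
  have "cinner x y + cinner x (- y) = 0"
    using cinner_add_right[of x y "- y"] by simp
  then show ?thesis
    by (metis group_add_class.minus_unique)
qed

lemma cinner_diff_left: "cinner (x - y) z = cinner x z - cinner y z"
  using cinner_add_left[of x "- y" z] by (simp add: cinner_minus_left)

lemma cinner_diff_right: "cinner x (y - z) = cinner x y - cinner x z"
  using cinner_add_right[of x y "- z"] by (simp add: cinner_minus_right)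

lemma cinner_scaleR_left: "cinner (r *\<^sub>R x) y = r * cinner x y"
  by (simp add: scaleR_scaleC cinner_scaleC_left)

lemma cinner_self: "cinner x x = complex_of_real ((norm x)\<^sup>2)"
  using cinner_ge_zero[of x] norm_eq_sqrt_cinner[of x] by (simp add: complex_eq_iff)

lemma power2_norm_eq_cinner: "(norm x)\<^sup>2 = Re (cinner x x)"
  by (simp add: cinner_self)

lemma cinner_extensional_right:
  assumes "\<And>x. cinner x a = cinner x b"
  shows "a = b"
proof -
  have "cinner (a - b) (a - b) = 0"
    using assms[of "a - b"] by (simp add: cinner_diff_right)
  then show ?thesis
    by (simp add: cinner_eq_zero_iff)
qed

lemma cinner_extensional_left:
  assumes "\<And>x. cinner a x = cinner b x"
  shows "a = b"
proof (rule cinner_extensional_right)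
  show "cinner x a = cinner x b" for x
    using arg_cong[OF assms[of x], of cnj] by simp
qed

lemma power2_norm_diff:
  "(norm (x - y))\<^sup>2 = (norm x)\<^sup>2 + (norm y)\<^sup>2 - 2 * Re (cinner x y)"
proof -
  have "Re (cinner y x) = Re (cinner x y)"
    using cinner_commute[of y x] by (simp del: cnj_cinner)
  then show ?thesis
    by (simp add: power2_norm_eq_cinner cinner_diff_left cinner_diff_right)
qed

lemma parallelogram_law:
  "(norm (x + y))\<^sup>2 + (norm (x - y))\<^sup>2 = 2 * (norm x)\<^sup>2 + 2 * (norm y)\<^sup>2"
  using power2_norm_diff[of x "- y"] power2_norm_diff[of x y]
  by (simp add: cinner_minus_right)

lemma power2_norm_scaleC: "(norm (c *\<^sub>C x))\<^sup>2 = (cmod c)\<^sup>2 * (norm x)\<^sup>2"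
proof -
  have "cinner (c *\<^sub>C x) (c *\<^sub>C x) = cnj c * c * cinner x x"
    by (simp add: cinner_scaleC_left cinner_scaleC_right)
  also have "\<dots> = complex_of_real ((cmod c)\<^sup>2 * (norm x)\<^sup>2)"
    by (simp add: cinner_self mult.commute[of "cnj c"] complex_norm_square[symmetric])
  finally show ?thesis
    by (simp add: power2_norm_eq_cinner)
qed

end

lemma cauchy_schwarz_cinner:
  fixes x y :: "'a::complex_inner"
  shows "cmod (cinner x y) \<le> norm x * norm y"
proof (cases "y = 0")
  case False
  define c where "c = cinner y x"
  define N where "N = (norm y)\<^sup>2"
  \<comment> \<open>\<open>t *\<^sub>C y\<close> is the orthogonal projection of \<open>x\<close> onto \<open>y\<close>\<close>
  define t where "t = c / complex_of_real N"
  have N: "N > 0"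
    using False by (simp add: N_def)
  have ct: "cinner x y = cnj c"
    unfolding c_def by (rule cinner_commute)
  then have "t * cinner x y = complex_of_real ((cmod c)\<^sup>2 / N)"
    using complex_norm_square[of c] by (simp add: t_def)
  moreover have "(cmod t)\<^sup>2 * N = (cmod c)\<^sup>2 / N"
    using N by (simp add: t_def norm_divide power2_eq_square)
  moreover have "0 \<le> (norm (x - t *\<^sub>C y))\<^sup>2"
    by simp
  ultimately have "0 \<le> (norm x)\<^sup>2 - (cmod c)\<^sup>2 / N"
    by (simp add: power2_norm_diff power2_norm_scaleC cinner_scaleC_right N_def)
  then have "(cmod c)\<^sup>2 \<le> (norm x * norm y)\<^sup>2"
    using N by (simp add: N_def power_mult_distrib field_simps)
  then have "cmod c \<le> norm x * norm y"
    by (rule power2_le_imp_le) simp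
  then show ?thesis
    by (simp add: ct)
qed simp

section \<open>Riesz representation\<close>

lemma minimizing_sequence_Cauchy:
  fixes X :: "nat \<Rightarrow> 'a::real_normed_vector"
  assumes parallelogram: "\<And>m n. (norm (X m - X n))\<^sup>2 \<le> 2 * (norm (X m))\<^sup>2 + 2 * (norm (X n))\<^sup>2 - 4 * D"
    and minimizing: "\<And>n. (norm (X n))\<^sup>2 < D + inverse (real (Suc n))"
  shows "Cauchy X"
proof (rule CauchyI)
  fix e :: real
  assume e: "0 < e"
  obtain M where M: "inverse (real (Suc M)) < e\<^sup>2 / 4"
    using reals_Archimedean[of "e\<^sup>2 / 4"] e by auto
  have "norm (X m - X n) < e" if "m \<ge> M" "n \<ge> M" for m n
  proof -
    have "inverse (real (Suc m)) \<le> inverse (real (Suc M))" "inverse (real (Suc n)) \<le> inverse (real (Suc M))"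
      using that by (simp_all add: field_simps)
    then have "(norm (X m - X n))\<^sup>2 < e\<^sup>2"
      using parallelogram[of m n] minimizing[of m] minimizing[of n] M by linarith
    then show ?thesis
      using e by (simp add: power_less_imp_less_base)
  qed
  then show "\<exists>M. \<forall>m\<ge>M. \<forall>n\<ge>M. norm (X m - X n) < e"
    by blast
qed

lemma min_norm_point_exists:
  fixes H :: "'a::chilbert_space set"
  assumes "H \<noteq> {}" and "closed H"
    and midpoint: "\<And>a b. a \<in> H \<Longrightarrow> b \<in> H \<Longrightarrow> (1/2::real) *\<^sub>R (a + b) \<in> H"
  shows "\<exists>z\<in>H. \<forall>w\<in>H. norm z \<le> norm w"
proof -
  define D where "D = (INF x\<in>H. (norm x)\<^sup>2)"
  have bdd: "bdd_below ((\<lambda>x. (norm x)\<^sup>2) ` H)"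
    by (rule bdd_belowI[of _ 0]) auto
  have D_le: "D \<le> (norm w)\<^sup>2" if "w \<in> H" for w
    unfolding D_def using bdd that by (rule cINF_lower)
  have "\<exists>x\<in>H. (norm x)\<^sup>2 < D + inverse (real (Suc n))" for n
  proof -
    have "(INF x\<in>H. (norm x)\<^sup>2) < D + inverse (real (Suc n))"
      by (simp add: D_def)
    then show ?thesis
      using cINF_less_iff[OF \<open>H \<noteq> {}\<close> bdd] by blast
  qed
  then obtain X where X: "\<And>n. X n \<in> H" "\<And>n. (norm (X n))\<^sup>2 < D + inverse (real (Suc n))"
    by metis
  have "(norm (a - b))\<^sup>2 \<le> 2 * (norm a)\<^sup>2 + 2 * (norm b)\<^sup>2 - 4 * D" if "a \<in> H" "b \<in> H" for a b
  proof -
    have "D \<le> (norm ((1/2::real) *\<^sub>R (a + b)))\<^sup>2"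
      using midpoint[OF that] by (rule D_le)
    then have "4 * D \<le> (norm (a + b))\<^sup>2"
      by (simp add: power2_eq_square)
    then show ?thesis
      using parallelogram_law[of a b] by linarith
  qed
  then have "Cauchy X"
    using X by (intro minimizing_sequence_Cauchy) auto
  then obtain z where z: "X \<longlonglongrightarrow> z"
    using Cauchy_convergent_iff convergent_def by blast
  have "z \<in> H"
    using \<open>closed H\<close> X(1) z closed_sequentially by blast
  moreover have "(norm z)\<^sup>2 \<le> D"
  proof (rule LIMSEQ_le)
    show "(\<lambda>n. (norm (X n))\<^sup>2) \<longlonglongrightarrow> (norm z)\<^sup>2"
      by (intro tendsto_intros z)
    show "(\<lambda>n. D + inverse (real (Suc n))) \<longlonglongrightarrow> D"
      using tendsto_add[OF tendsto_const LIMSEQ_inverse_real_of_nat] by simp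
    show "\<exists>N. \<forall>n\<ge>N. (norm (X n))\<^sup>2 \<le> D + inverse (real (Suc n))"
      using X(2) less_imp_le by blast
  qed
  ultimately show ?thesis
    using D_le by (metis order_trans power2_le_imp_le norm_ge_zero)
qed

lemma min_norm_on_line_orthogonal:
  fixes z y :: "'a::complex_inner"
  assumes min: "\<And>t. norm z \<le> norm (z - t *\<^sub>C y)"
  shows "cinner z y = 0"
proof -
  define c where "c = cinner z y"
  define s where "s = 1 / ((norm y)\<^sup>2 + 1)"
  have "0 < (norm y)\<^sup>2 + 1"
    by (simp add: add_nonneg_pos)
  then have s: "s > 0" "s * (norm y)\<^sup>2 \<le> 1"
    by (simp_all add: s_def field_simps)
  have "(norm z)\<^sup>2 \<le> (norm (z - (complex_of_real s * cnj c) *\<^sub>C y))\<^sup>2"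
    using min by (simp add: power_mono)
  also have "\<dots> = (norm z)\<^sup>2 + s\<^sup>2 * (cmod c)\<^sup>2 * (norm y)\<^sup>2 - 2 * (s * (cmod c)\<^sup>2)"
  proof -
    have "Re (cinner z ((complex_of_real s * cnj c) *\<^sub>C y)) = s * (cmod c)\<^sup>2"
      by (simp add: cinner_scaleC_right c_def[symmetric] mult.assoc
          mult.commute[of "cnj c"] complex_norm_square[symmetric])
    moreover have "(cmod (complex_of_real s * cnj c))\<^sup>2 = s\<^sup>2 * (cmod c)\<^sup>2"
      using s by (simp add: norm_mult power_mult_distrib)
    ultimately show ?thesis
      by (simp add: power2_norm_diff power2_norm_scaleC)
  qed
  finally have "2 * (cmod c)\<^sup>2 \<le> (s * (norm y)\<^sup>2) * (cmod c)\<^sup>2"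
    using s by (simp add: power2_eq_square algebra_simps)
  also have "\<dots> \<le> (cmod c)\<^sup>2"
    using s by (simp add: mult_left_le_one_le)
  finally show ?thesis
    by (simp add: c_def)
qed

lemma riesz_representation:
  fixes f :: "'a::chilbert_space \<Rightarrow> complex"
  assumes add: "\<And>x y. f (x + y) = f x + f y"
    and scale: "\<And>c x. f (c *\<^sub>C x) = c * f x"
    and bounded: "\<And>x. cmod (f x) \<le> norm x * C"
  shows "\<exists>z. \<forall>x. f x = cinner z x"
proof (cases "\<forall>x. f x = 0")
  case True
  then show ?thesis
    by (intro exI[of _ 0]) simp
next
  case False
  then obtain x1 where x1: "f x1 \<noteq> 0"
    by blast
  have f_diff: "f (x - y) = f x - f y" for x y
    using add[of "x - y" y] by simp
  have f_scaleR: "f (r *\<^sub>R x) = complex_of_real r * f x" for r x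
    by (simp add: scaleR_scaleC scale)
  have "bounded_linear f"
    by (rule bounded_linear_intro[OF add, of C]) (simp_all add: f_scaleR scaleR_conv_of_real bounded)
  then have "closed {x. f x = 1}"
    by (intro closed_Collect_eq continuous_on_const linear_continuous_on)
  moreover have "(1 / f x1) *\<^sub>C x1 \<in> {x. f x = 1}"
    using x1 by (simp add: scale)
  ultimately obtain z where z: "f z = 1" and z_min: "\<And>w. f w = 1 \<Longrightarrow> norm z \<le> norm w"
    using min_norm_point_exists[of "{x. f x = 1}"] by (auto simp: f_scaleR add)
  have orth: "cinner z y = 0" if "f y = 0" for y
    using z z_min that by (intro min_norm_on_line_orthogonal) (simp add: f_diff scale)
  have "f x = cinner ((1 / (norm z)\<^sup>2) *\<^sub>R z) x" for x
  proof -
    have "cinner z (x - f x *\<^sub>C z) = 0"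
      using z by (intro orth) (simp add: f_diff scale)
    then have "cinner z x = f x * complex_of_real ((norm z)\<^sup>2)"
      by (simp add: cinner_diff_right cinner_scaleC_right cinner_self)
    moreover have "z \<noteq> 0"
      using z add[of 0 0] by auto
    ultimately show ?thesis
      by (simp add: cinner_scaleR_left)
  qed
  then show ?thesis
    by blast
qed

section \<open>Operators with an adjoint\<close>

definition has_adjoint :: "('a::chilbert_space \<Rightarrow> 'a) \<Rightarrow> bool" where
  "has_adjoint T \<longleftrightarrow> (\<exists>S. \<forall>x y. cinner (T x) y = cinner x (S y))"

lemma has_adjointI: "(\<And>x y. cinner (T x) y = cinner x (S y)) \<Longrightarrow> has_adjoint T"
  unfolding has_adjoint_def by blast

lemma adj_eqI:
  fixes T S :: "'a::chilbert_space \<Rightarrow> 'a"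
  assumes "\<And>x y. cinner (T x) y = cinner x (S y)"
  shows "adj T = S"
  unfolding adj_def
proof (rule the_equality)
  show "\<forall>x y. cinner (T x) y = cinner x (S y)"
    using assms by blast
  show "S' = S" if "\<forall>x y. cinner (T x) y = cinner x (S' y)" for S'
    using that assms by (intro ext cinner_extensional_right) metis
qed

lemma cinner_adj_right:
  assumes "has_adjoint T"
  shows "cinner (T x) y = cinner x (adj T y)"
  using assms adj_eqI unfolding has_adjoint_def by metis

lemma cinner_adj_left:
  assumes "has_adjoint T"
  shows "cinner (adj T y) x = cinner y (T x)"
  using cinner_adj_right[OF assms, of x y] by (metis cnj_cinner)

lemma has_adjoint_additive: "has_adjoint T \<Longrightarrow> T (x + y) = T x + T y"
  by (rule cinner_extensional_left) (simp add: cinner_adj_right cinner_add_left)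

lemma has_adjoint_scaleC: "has_adjoint T \<Longrightarrow> T (c *\<^sub>C x) = c *\<^sub>C T x"
  by (rule cinner_extensional_left) (simp add: cinner_adj_right cinner_scaleC_left)

lemma has_adjoint_adj: "has_adjoint T \<Longrightarrow> has_adjoint (adj T)"
  by (rule has_adjointI[of _ T]) (simp add: cinner_adj_left)

lemma adj_adj: "has_adjoint T \<Longrightarrow> adj (adj T) = T"
  by (rule adj_eqI) (simp add: cinner_adj_left)

lemma has_adjoint_comp: "has_adjoint S \<Longrightarrow> has_adjoint T \<Longrightarrow> has_adjoint (S \<circ> T)"
  by (rule has_adjointI[of _ "adj T \<circ> adj S"]) (simp add: cinner_adj_right)

lemma adj_comp: "has_adjoint S \<Longrightarrow> has_adjoint T \<Longrightarrow> adj (S \<circ> T) = adj T \<circ> adj S"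
  by (rule adj_eqI) (simp add: cinner_adj_right)

lemma has_adjoint_plus: "has_adjoint S \<Longrightarrow> has_adjoint T \<Longrightarrow> has_adjoint (S + T)"
  by (rule has_adjointI[of _ "adj S + adj T"]) (simp add: cinner_adj_right cinner_add_left cinner_add_right)

lemma adj_plus: "has_adjoint S \<Longrightarrow> has_adjoint T \<Longrightarrow> adj (S + T) = adj S + adj T"
  by (rule adj_eqI) (simp add: cinner_adj_right cinner_add_left cinner_add_right)

lemma has_adjoint_uminus: "has_adjoint S \<Longrightarrow> has_adjoint (- S)"
  by (rule has_adjointI[of _ "- adj S"]) (simp add: cinner_adj_right cinner_minus_left cinner_minus_right)

lemma has_adjoint_minus: "has_adjoint S \<Longrightarrow> has_adjoint T \<Longrightarrow> has_adjoint (S - T)"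
  by (rule has_adjointI[of _ "adj S - adj T"]) (simp add: cinner_adj_right cinner_diff_left cinner_diff_right)

lemma has_adjoint_zero: "has_adjoint (0::'a::chilbert_space \<Rightarrow> 'a)"
  by (rule has_adjointI[of _ 0]) simp

lemma has_adjoint_id: "has_adjoint (id::'a::chilbert_space \<Rightarrow> 'a)"
  by (rule has_adjointI[of _ id]) simp

lemma has_adjoint_opscale: "has_adjoint S \<Longrightarrow> has_adjoint (opscale c S)"
  by (rule has_adjointI[of _ "opscale (cnj c) (adj S)"])
    (simp add: opscale_def cinner_adj_right cinner_scaleC_left cinner_scaleC_right)

lemma adj_opscale: "has_adjoint S \<Longrightarrow> adj (opscale c S) = opscale (cnj c) (adj S)"
  by (rule adj_eqI) (simp add: opscale_def cinner_adj_right cinner_scaleC_left cinner_scaleC_right)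

lemma bounded_op_has_adjoint:
  fixes T :: "'a::chilbert_space \<Rightarrow> 'a"
  assumes "bounded_op T"
  shows "has_adjoint T"
proof -
  obtain C where C: "\<And>x. norm (T x) \<le> norm x * C" and "clinear T"
    using assms unfolding bounded_op_def by blast
  have "\<exists>z. \<forall>x. cinner y (T x) = cinner z x" for y
  proof (rule riesz_representation)
    show "cinner y (T (x1 + x2)) = cinner y (T x1) + cinner y (T x2)" for x1 x2
      using \<open>clinear T\<close> by (simp add: clinear_def cinner_add_right)
    show "cinner y (T (c *\<^sub>C x)) = c * cinner y (T x)" for c x
      using \<open>clinear T\<close> by (simp add: clinear_def cinner_scaleC_right)
    show "cmod (cinner y (T x)) \<le> norm x * (norm y * C)" for x
      using cauchy_schwarz_cinner[of y "T x"] mult_left_mono[OF C[of x], of "norm y"]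
      by (simp add: ac_simps)
  qed
  then obtain Z where "\<And>y x. cinner y (T x) = cinner (Z y) x"
    by metis
  then have "cinner (T x) y = cinner x (Z y)" for x y
    by (metis cnj_cinner)
  then show ?thesis
    by (rule has_adjointI)
qed

lemma orth_proj_self_adjoint:
  assumes "is_orth_proj P M"
  shows "has_adjoint P" and "adj P = P"
proof -
  have "cinner (P x) y = cinner (P x) (P y)" for x y
    using assms unfolding is_orth_proj_def by (metis cinner_diff_right eq_iff_diff_eq_0)
  then have "cinner (P x) y = cinner x (P y)" for x y
    by (metis cnj_cinner)
  then show "has_adjoint P" "adj P = P"
    by (auto intro: has_adjointI adj_eqI)
qed

lemma orth_proj_idempotent:
  assumes "is_orth_proj P M"
  shows "P \<circ> P = P"
proof
  fix x
  have "cinner z (P (P x)) = cinner z (P x)" for z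
  proof -
    have "cinner (P z) (P x - P (P x)) = 0" "cinner (P z) (x - P x) = 0"
      using assms unfolding is_orth_proj_def by blast+
    then show ?thesis
      using orth_proj_self_adjoint[OF assms] cinner_adj_right[of P]
      by (metis cinner_diff_right eq_iff_diff_eq_0)
  qed
  then show "(P \<circ> P) x = P x"
    by (simp add: cinner_extensional_right)
qed

section \<open>\<open>*\<close>-algebras\<close>

class star_algebra = real_algebra + monoid_mult +
  fixes dag :: "'a \<Rightarrow> 'a"
  assumes dag_add [simp]: "dag (a + b) = dag a + dag b"
    and dag_mult [simp]: "dag (a * b) = dag b * dag a"
    and dag_dag [simp]: "dag (dag a) = a"
    and dag_scaleR [simp]: "dag (r *\<^sub>R a) = r *\<^sub>R dag a"
begin

lemma dag_zero [simp]: "dag 0 = 0"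
  using dag_add[of 0 0] by simp

lemma dag_uminus [simp]: "dag (- a) = - dag a"
  using dag_add[of a "- a"] by (simp add: eq_neg_iff_add_eq_0 add.commute)

lemma dag_diff [simp]: "dag (a - b) = dag a - dag b"
  using dag_add[of a "- b"] by simp

lemma dag_one [simp]: "dag 1 = 1"
  using dag_mult[of "dag 1" 1] by simp

lemma dag_sum [simp]: "dag (sum f A) = (\<Sum>i\<in>A. dag (f i))"
  by (induction A rule: infinite_finite_induct) simp_all

lemmas dag_simps = dag_add dag_mult dag_dag dag_scaleR dag_zero dag_uminus dag_diff dag_one dag_sum

end

typedef (overloaded) 'a aop = "{T::'a::chilbert_space \<Rightarrow> 'a. has_adjoint T}"
  morphisms fun_of_aop aop_of_fun
  using has_adjoint_id by blast

setup_lifting type_definition_aop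

instantiation aop :: (chilbert_space) star_algebra
begin

lift_definition zero_aop :: "'a aop" is 0 by (rule has_adjoint_zero)
lift_definition one_aop :: "'a aop" is id by (rule has_adjoint_id)
lift_definition plus_aop :: "'a aop \<Rightarrow> 'a aop \<Rightarrow> 'a aop" is "(+)" by (rule has_adjoint_plus)
lift_definition minus_aop :: "'a aop \<Rightarrow> 'a aop \<Rightarrow> 'a aop" is "(-)" by (rule has_adjoint_minus)
lift_definition uminus_aop :: "'a aop \<Rightarrow> 'a aop" is uminus by (rule has_adjoint_uminus)
lift_definition times_aop :: "'a aop \<Rightarrow> 'a aop \<Rightarrow> 'a aop" is "(\<circ>)" by (rule has_adjoint_comp)
lift_definition scaleR_aop :: "real \<Rightarrow> 'a aop \<Rightarrow> 'a aop" is "\<lambda>r. opscale (complex_of_real r)"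
  by (rule has_adjoint_opscale)
lift_definition dag_aop :: "'a aop \<Rightarrow> 'a aop" is adj by (rule has_adjoint_adj)

instance
proof
  fix a b c :: "'a aop" and r s :: real
  show "a + b + c = a + (b + c)" by transfer (simp add: add.assoc)
  show "a + b = b + a" by transfer (simp add: add.commute)
  show "0 + a = a" by transfer simp
  show "- a + a = 0" by transfer simp
  show "a - b = a + - b" by transfer simp
  show "a * b * c = a * (b * c)" by transfer (simp add: comp_assoc)
  show "(a + b) * c = a * c + b * c" by transfer (simp add: fun_eq_iff)
  show "a * (b + c) = a * b + a * c" by transfer (simp add: fun_eq_iff has_adjoint_additive)
  show "r *\<^sub>R (a + b) = r *\<^sub>R a + r *\<^sub>R b" by transfer (simp add: fun_eq_iff opscale_def scaleC_add_right)
  show "(r + s) *\<^sub>R a = r *\<^sub>R a + s *\<^sub>R a" by transfer (simp add: fun_eq_iff opscale_def scaleC_add_left)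
  show "r *\<^sub>R s *\<^sub>R a = (r * s) *\<^sub>R a" by transfer (simp add: fun_eq_iff opscale_def scaleC_scaleC)
  show "1 *\<^sub>R a = a" by transfer (simp add: fun_eq_iff opscale_def scaleC_one)
  show "r *\<^sub>R a * b = r *\<^sub>R (a * b)" by transfer (simp add: fun_eq_iff opscale_def)
  show "a * r *\<^sub>R b = r *\<^sub>R (a * b)" by transfer (simp add: fun_eq_iff opscale_def has_adjoint_scaleC)
  show "1 * a = a" by transfer simp
  show "a * 1 = a" by transfer simp
  show "dag (a + b) = dag a + dag b" by transfer (rule adj_plus)
  show "dag (a * b) = dag b * dag a" by transfer (rule adj_comp)
  show "dag (dag a) = a" by transfer (rule adj_adj)
  show "dag (r *\<^sub>R a) = r *\<^sub>R dag a" by transfer (simp add: adj_opscale)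
qed

end

lemma aop_eq_iff: "a = b \<longleftrightarrow> fun_of_aop a = fun_of_aop b"
  by (simp add: fun_of_aop_inject)

lemma fun_of_aop_zero: "fun_of_aop 0 = 0" by transfer simp
lemma fun_of_aop_one: "fun_of_aop 1 = id" by transfer simp
lemma fun_of_aop_plus: "fun_of_aop (a + b) = fun_of_aop a + fun_of_aop b" by transfer simp
lemma fun_of_aop_uminus: "fun_of_aop (- a) = - fun_of_aop a" by transfer simp
lemma fun_of_aop_minus: "fun_of_aop (a - b) = fun_of_aop a - fun_of_aop b" by transfer simp
lemma fun_of_aop_times: "fun_of_aop (a * b) = fun_of_aop a \<circ> fun_of_aop b" by transfer simp
lemma fun_of_aop_scaleR: "fun_of_aop (r *\<^sub>R a) = opscale (complex_of_real r) (fun_of_aop a)" by transfer simp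
lemma fun_of_aop_dag: "fun_of_aop (dag a) = adj (fun_of_aop a)" by transfer simp

lemma fun_of_aop_sum: "fun_of_aop (sum f A) = (\<Sum>i\<in>A. fun_of_aop (f i))"
  by (induction A rule: infinite_finite_induct) (simp_all add: fun_of_aop_zero fun_of_aop_plus)

lemma fun_of_aop_kronecker: "fun_of_aop (if c then 1 else 0) = (if c then id else 0)"
  by (simp add: fun_of_aop_one fun_of_aop_zero)

lemmas fun_of_aop_simps = fun_of_aop_zero fun_of_aop_one fun_of_aop_plus fun_of_aop_uminus
  fun_of_aop_minus fun_of_aop_times fun_of_aop_scaleR fun_of_aop_dag fun_of_aop_sum fun_of_aop_kronecker


section \<open>Identities behind the reduced generator\<close>

lemma quadratic_eq_zero_coeffs:
  fixes u v w :: "'a::real_vector"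
  assumes "\<forall>k::real\<ge>0. k\<^sup>2 *\<^sub>R u + k *\<^sub>R v + w = 0"
  shows "u = 0" and "v = 0" and "w = 0"
proof -
  have "w = 0" "u + v + w = 0" "4 *\<^sub>R u + 2 *\<^sub>R v + w = 0"
    using assms[rule_format, of 0] assms[rule_format, of 1] assms[rule_format, of 2]
    by (simp_all add: power2_eq_square)
  then show "u = 0" "v = 0" "w = 0"
    by (simp_all add: eq_neg_iff_add_eq_0[symmetric] scaleR_minus_right scaleR_left_distrib[symmetric])
qed

lemma dissipation_coeffs:
  fixes y a b :: "'a::star_algebra" and f g :: "nat \<Rightarrow> 'a"
  assumes "\<forall>k::real\<ge>0. (k\<^sup>2 *\<^sub>R y + k *\<^sub>R a + b) + dag (k\<^sup>2 *\<^sub>R y + k *\<^sub>R a + b)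
      = - (\<Sum>i\<in>I. dag (k *\<^sub>R f i + g i) * (k *\<^sub>R f i + g i))"
  shows "y + dag y = - (\<Sum>i\<in>I. dag (f i) * f i)"
    and "a + dag a = - (\<Sum>i\<in>I. dag (f i) * g i + dag (g i) * f i)"
    and "b + dag b = - (\<Sum>i\<in>I. dag (g i) * g i)"
proof -
  have "dag (k *\<^sub>R f i + g i) * (k *\<^sub>R f i + g i)
      = k\<^sup>2 *\<^sub>R (dag (f i) * f i) + k *\<^sub>R (dag (f i) * g i + dag (g i) * f i) + dag (g i) * g i"
    for k i
    by (simp add: algebra_simps power2_eq_square)
  then have "\<forall>k::real\<ge>0. k\<^sup>2 *\<^sub>R (y + dag y + (\<Sum>i\<in>I. dag (f i) * f i))
      + k *\<^sub>R (a + dag a + (\<Sum>i\<in>I. dag (f i) * g i + dag (g i) * f i))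
      + (b + dag b + (\<Sum>i\<in>I. dag (g i) * g i)) = 0"
    using assms by (simp add: sum.distrib scaleR_sum_right algebra_simps eq_neg_iff_add_eq_0 power2_eq_square)
  from quadratic_eq_zero_coeffs[OF this] show
    "y + dag y = - (\<Sum>i\<in>I. dag (f i) * f i)"
    "a + dag a = - (\<Sum>i\<in>I. dag (f i) * g i + dag (g i) * f i)"
    "b + dag b = - (\<Sum>i\<in>I. dag (g i) * g i)"
    by (simp_all add: eq_neg_iff_add_eq_0)
qed

lemma reduced_dissipation_identity:
  fixes y a b y1 p :: "'a::star_algebra" and f g :: "nat \<Rightarrow> 'a"
  assumes Y: "y + dag y = - (\<Sum>i\<in>I. dag (f i) * f i)"
    and A: "a + dag a = - (\<Sum>i\<in>I. dag (f i) * g i + dag (g i) * f i)"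
    and B: "b + dag b = - (\<Sum>i\<in>I. dag (g i) * g i)"
    and inverse: "y * y1 * (1 - p) * a * p = (1 - p) * a * p"
    and pap: "p * a * p = 0"
    and fp: "\<forall>i\<in>I. f i * p = 0"
    and p: "dag p = p"
  shows "p * (b - a * y1 * a) * p + dag (p * (b - a * y1 * a) * p)
    = - (\<Sum>i\<in>I. dag ((g i - f i * y1 * a) * p) * ((g i - f i * y1 * a) * p))"
proof -
  \<comment> \<open>\<open>(g i - f i * y1 * a) * p = g i * p - f i * v\<close>, and \<open>inverse\<close> turns \<open>a * p\<close> into \<open>y * v\<close>\<close>
  define v where "v = y1 * a * p"
  have yv: "y * v = a * p"
    using inverse pap by (simp add: v_def algebra_simps)
  have pa: "p * a = - dag (a * p) - (\<Sum>i\<in>I. p * dag (g i) * f i)"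
  proof -
    have "p * dag (f i) = 0" if "i \<in> I" for i
      using arg_cong[of _ _ dag, OF fp[rule_format, OF that]] p by simp
    then have "p * (a + dag a) = - (\<Sum>i\<in>I. p * dag (g i) * f i)"
      unfolding A by (simp add: sum_distrib_left distrib_left mult.assoc[symmetric])
    then show ?thesis
      using p by (simp add: algebra_simps eq_neg_iff_add_eq_0)
  qed
  have "p * (b - a * y1 * a) * p + dag (p * (b - a * y1 * a) * p)
      = p * (b + dag b) * p - (p * a * v + dag (p * a * v))"
    using p by (simp add: v_def algebra_simps)
  also have "p * a * v + dag (p * a * v)
      = - (dag v * (y + dag y) * v) - (\<Sum>i\<in>I. p * dag (g i) * (f i * v) + dag (f i * v) * g i * p)"
    using p by (simp add: pa yv[symmetric] sum_distrib_right sum.distrib algebra_simps)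
  also have "p * (b + dag b) * p = - (\<Sum>i\<in>I. dag (g i * p) * (g i * p))"
    using p by (simp add: B sum_distrib_left sum_distrib_right mult.assoc)
  also have "dag v * (y + dag y) * v = - (\<Sum>i\<in>I. dag (f i * v) * (f i * v))"
    by (simp add: Y sum_distrib_left sum_distrib_right mult.assoc)
  finally have "p * (b - a * y1 * a) * p + dag (p * (b - a * y1 * a) * p)
      = - (\<Sum>i\<in>I. dag (g i * p) * (g i * p)) - (\<Sum>i\<in>I. dag (f i * v) * (f i * v))
        + (\<Sum>i\<in>I. p * dag (g i) * (f i * v) + dag (f i * v) * g i * p)"
    by simp
  moreover have "dag ((g i - f i * y1 * a) * p) * ((g i - f i * y1 * a) * p)
      = dag (g i * p) * (g i * p) + dag (f i * v) * (f i * v)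
        - (p * dag (g i) * (f i * v) + dag (f i * v) * g i * p)" for i
    using p by (simp add: v_def algebra_simps)
  ultimately show ?thesis
    by (simp add: sum.distrib sum_subtractf)
qed

lemma kronecker_sum_expand:
  fixes f :: "nat \<Rightarrow> 'a::star_algebra" and w :: "nat \<Rightarrow> nat \<Rightarrow> 'a"
  assumes "finite I" "i \<in> I"
  shows "(\<Sum>l\<in>I. ((if i = l then 1 else 0) + f i * y1 * dag (f l)) * w l j)
    = w i j + f i * y1 * (\<Sum>l\<in>I. dag (f l) * w l j)"
proof -
  have "((if i = l then 1 else 0) + f i * y1 * dag (f l)) * w l j
      = (if i = l then w l j else 0) + f i * y1 * (dag (f l) * w l j)" for l
    by (simp add: distrib_right mult.assoc)
  then show ?thesis
    using assms by (simp add: sum.distrib sum_distrib_left)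
qed

lemma orthonormal_rows_sum:
  fixes w :: "nat \<Rightarrow> nat \<Rightarrow> 'a::star_algebra" and f :: "nat \<Rightarrow> 'a"
  assumes "finite I"
    and rows: "\<forall>i\<in>I. \<forall>j\<in>I. (\<Sum>l\<in>I. w i l * dag (w j l)) = (if i = j then 1 else 0)"
    and "j \<in> I"
  shows "(\<Sum>l\<in>I. (\<Sum>k\<in>I. dag (f k) * w k l) * dag (w j l)) = dag (f j)"
proof -
  have "(\<Sum>l\<in>I. (\<Sum>k\<in>I. dag (f k) * w k l) * dag (w j l))
      = (\<Sum>l\<in>I. \<Sum>k\<in>I. dag (f k) * (w k l * dag (w j l)))"
    by (simp add: sum_distrib_right mult.assoc)
  also have "\<dots> = (\<Sum>k\<in>I. dag (f k) * (\<Sum>l\<in>I. w k l * dag (w j l)))"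
    by (subst sum.swap) (simp add: sum_distrib_left)
  also have "\<dots> = (\<Sum>k\<in>I. if k = j then dag (f k) else 0)"
    using rows \<open>j \<in> I\<close> by (intro sum.cong) auto
  finally show ?thesis
    using assms by simp
qed

lemma orthonormal_rows_perturbation:
  fixes w :: "nat \<Rightarrow> nat \<Rightarrow> 'a::star_algebra" and f :: "nat \<Rightarrow> 'a"
  assumes "finite I"
    and rows: "\<forall>i\<in>I. \<forall>j\<in>I. (\<Sum>l\<in>I. w i l * dag (w j l)) = (if i = j then 1 else 0)"
    and "i \<in> I" "j \<in> I"
  defines "m l \<equiv> \<Sum>k\<in>I. dag (f k) * w k l"
  shows "(\<Sum>l\<in>I. (w i l + f i * c * m l) * dag (w j l + f j * c * m l))
    = (if i = j then 1 else 0) + f i * c * dag (f j) + f i * dag c * dag (f j)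
      + f i * c * (\<Sum>k\<in>I. dag (f k) * f k) * dag c * dag (f j)"
proof -
  have m: "(\<Sum>l\<in>I. m l * dag (w k l)) = dag (f k)" if "k \<in> I" for k
    unfolding m_def using \<open>finite I\<close> rows that by (rule orthonormal_rows_sum)
  have "(\<Sum>l\<in>I. w k l * dag (m l)) = f k" if "k \<in> I" for k
    using arg_cong[of _ _ dag, OF m[OF that]] by simp
  moreover have mm: "(\<Sum>l\<in>I. m l * dag (m l)) = (\<Sum>k\<in>I. dag (f k) * f k)"
  proof -
    have "(\<Sum>l\<in>I. m l * dag (m l)) = (\<Sum>l\<in>I. \<Sum>k\<in>I. m l * dag (w k l) * f k)"
      by (simp add: m_def sum_distrib_left mult.assoc)
    also have "\<dots> = (\<Sum>k\<in>I. (\<Sum>l\<in>I. m l * dag (w k l)) * f k)"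
      by (subst sum.swap) (simp add: sum_distrib_right)
    finally show ?thesis
      using m by simp
  qed
  moreover have "(\<Sum>l\<in>I. (w i l + f i * c * m l) * dag (w j l + f j * c * m l))
      = (\<Sum>l\<in>I. w i l * dag (w j l)) + f i * c * (\<Sum>l\<in>I. m l * dag (w j l))
        + (\<Sum>l\<in>I. w i l * dag (m l)) * dag c * dag (f j)
        + f i * c * (\<Sum>l\<in>I. m l * dag (m l)) * dag c * dag (f j)"
    by (simp add: algebra_simps sum.distrib sum_distrib_left sum_distrib_right)
  ultimately show ?thesis
    using rows m \<open>i \<in> I\<close> \<open>j \<in> I\<close> by simp
qed

lemma orthonormal_columns_perturbation:
  fixes w :: "nat \<Rightarrow> nat \<Rightarrow> 'a::star_algebra" and f :: "nat \<Rightarrow> 'a"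
  assumes cols: "\<forall>i\<in>I. \<forall>j\<in>I. (\<Sum>l\<in>I. dag (w l i) * w l j) = (if i = j then 1 else 0)"
    and "i \<in> I" "j \<in> I"
  defines "m l \<equiv> \<Sum>k\<in>I. dag (f k) * w k l"
  shows "(\<Sum>l\<in>I. dag (w l i + f l * c * m i) * (w l j + f l * c * m j))
    = (if i = j then 1 else 0) + dag (m i) * c * m j + dag (m i) * dag c * m j
      + dag (m i) * dag c * (\<Sum>k\<in>I. dag (f k) * f k) * c * m j"
proof -
  have "(\<Sum>l\<in>I. dag (w l i + f l * c * m i) * (w l j + f l * c * m j))
      = (\<Sum>l\<in>I. dag (w l i) * w l j) + dag (\<Sum>l\<in>I. dag (f l) * w l i) * c * m j
        + dag (m i) * dag c * (\<Sum>l\<in>I. dag (f l) * w l j)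
        + dag (m i) * dag c * (\<Sum>k\<in>I. dag (f k) * f k) * c * m j"
    by (simp add: algebra_simps sum.distrib sum_distrib_left sum_distrib_right)
  then show ?thesis
    using cols \<open>i \<in> I\<close> \<open>j \<in> I\<close> by (simp add: m_def)
qed

lemma compression_mult:
  fixes x z p :: "'a::star_algebra"
  assumes "(1 - p) * x * p = 0" and "p * x * (1 - p) = 0" and "(1 - p) * z * p = 0"
    and "dag p = p"
  shows "x * p * dag z = p * (x * dag z) * p"
proof -
  have xp: "x * p = p * x * p" and px: "p * x * p = p * x" and zp: "z * p = p * z * p"
    using assms(1-3) by (simp_all add: left_diff_distrib right_diff_distrib)
  have pz: "p * dag z = p * dag z * p"
  proof -
    have "p * dag z = dag (z * p)"
      using \<open>dag p = p\<close> by simp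
    also have "\<dots> = dag (p * z * p)"
      by (simp only: zp)
    also have "\<dots> = p * dag z * p"
      using \<open>dag p = p\<close> by (simp add: mult.assoc)
    finally show ?thesis .
  qed
  have "x * p * dag z = p * x * p * dag z"
    by (simp only: xp[symmetric])
  also have "\<dots> = p * x * (p * dag z * p)"
    by (simp only: mult.assoc pz[symmetric, unfolded mult.assoc])
  also have "\<dots> = p * (x * dag z) * p"
    by (simp only: mult.assoc[symmetric] px)
  finally show ?thesis .
qed

lemma reduced_scattering_rows_orthonormal:
  fixes y y1 p :: "'a::star_algebra" and f :: "nat \<Rightarrow> 'a" and w s :: "nat \<Rightarrow> nat \<Rightarrow> 'a"
  assumes "finite I"
    and rows: "\<forall>i\<in>I. \<forall>j\<in>I. (\<Sum>l\<in>I. w i l * dag (w j l)) = (if i = j then 1 else 0)"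
    and Y: "y + dag y = - (\<Sum>i\<in>I. dag (f i) * f i)"
    and fp: "\<forall>i\<in>I. f i * p = 0"
    and p: "dag p = p" "p * p = p"
    and s: "\<And>i j. s i j = (\<Sum>l\<in>I. ((if i = l then 1 else 0) + f i * y1 * dag (f l)) * w l j) * p"
    and decoupled: "\<forall>i\<in>I. \<forall>j\<in>I.
      p * (\<Sum>l\<in>I. ((if i = l then 1 else 0) + f i * y1 * dag (f l)) * w l j) * (1 - p) = 0"
    and invariant: "\<forall>i\<in>I. \<forall>j\<in>I. (1 - p) * s i j = 0"
    and inverse: "\<forall>i\<in>I. p * f i * (1 - p) * y1 * y = p * f i * (1 - p)"
    and "i \<in> I" "j \<in> I"
  shows "(\<Sum>l\<in>I. s i l * dag (s j l)) = (if i = j then p else 0)"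
proof -
  define t where "t i l = w i l + f i * y1 * (\<Sum>k\<in>I. dag (f k) * w k l)" for i l
  have pfy: "p * f k * y1 * y = p * f k" if "k \<in> I" for k
    using inverse fp that by (simp add: right_diff_distrib left_diff_distrib mult.assoc)
  \<comment> \<open>\<open>y1\<close> inverts \<open>y\<close> on the range of \<open>dag (f j) * p\<close>, so the \<open>y + dag y\<close> term cancels the middle two\<close>
  have cancel: "p * (f i * y1 * (y + dag y) * dag y1 * dag (f j)) * p
      = p * (f i * dag y1 * dag (f j)) * p + p * (f i * y1 * dag (f j)) * p"
  proof -
    have "dag (p * f j * y1 * y) = dag (p * f j)"
      using pfy[OF \<open>j \<in> I\<close>] by simp
    then have "dag y * dag y1 * dag (f j) * p = dag (f j) * p"
      using p(1) by (simp add: mult.assoc)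
    moreover have "p * f i * y1 * y * r = p * f i * r" for r
      using pfy[OF \<open>i \<in> I\<close>] by simp
    ultimately show ?thesis
      by (simp add: algebra_simps)
  qed
  have s_t: "s k l = t k l * p" "p * t k l * (1 - p) = 0" "(1 - p) * t k l * p = 0"
    if "k \<in> I" "l \<in> I" for k l
    using that decoupled invariant
    by (simp_all add: s t_def kronecker_sum_expand[OF \<open>finite I\<close>] mult.assoc[symmetric])
  have "s i l * dag (s j l) = p * (t i l * dag (t j l)) * p" if "l \<in> I" for l
  proof -
    have "s i l * dag (s j l) = t i l * (p * p) * dag (t j l)"
      using s_t(1) \<open>i \<in> I\<close> \<open>j \<in> I\<close> that p(1) by (simp add: mult.assoc)
    also have "\<dots> = p * (t i l * dag (t j l)) * p"
      using compression_mult[OF s_t(3,2) s_t(3) p(1)] \<open>i \<in> I\<close> \<open>j \<in> I\<close> that p(2) by simp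
    finally show ?thesis .
  qed
  then have "(\<Sum>l\<in>I. s i l * dag (s j l)) = p * (\<Sum>l\<in>I. t i l * dag (t j l)) * p"
    by (simp add: sum_distrib_left sum_distrib_right)
  also have "(\<Sum>l\<in>I. t i l * dag (t j l)) = (if i = j then 1 else 0)
      + f i * y1 * dag (f j) + f i * dag y1 * dag (f j)
      - f i * y1 * (y + dag y) * dag y1 * dag (f j)"
    unfolding t_def orthonormal_rows_perturbation[OF \<open>finite I\<close> rows \<open>i \<in> I\<close> \<open>j \<in> I\<close>] Y
    by simp
  also have "p * \<dots> * p = (if i = j then p else 0)"
    using cancel p by (simp add: algebra_simps)
  finally show ?thesis .
qed

lemma reduced_scattering_columns_orthonormal:
  fixes y y1 p :: "'a::star_algebra" and f :: "nat \<Rightarrow> 'a" and w s :: "nat \<Rightarrow> nat \<Rightarrow> 'a"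
  assumes "finite I"
    and cols: "\<forall>i\<in>I. \<forall>j\<in>I. (\<Sum>l\<in>I. dag (w l i) * w l j) = (if i = j then 1 else 0)"
    and Y: "y + dag y = - (\<Sum>i\<in>I. dag (f i) * f i)"
    and fp: "\<forall>i\<in>I. f i * p = 0"
    and p: "dag p = p" "p * p = p"
    and s: "\<And>i j. s i j = (\<Sum>l\<in>I. ((if i = l then 1 else 0) + f i * y1 * dag (f l)) * w l j) * p"
    and inverse: "\<forall>j\<in>I. y * y1 * (1 - p) * (\<Sum>i\<in>I. dag (f i) * w i j) * p
      = (1 - p) * (\<Sum>i\<in>I. dag (f i) * w i j) * p"
    and "i \<in> I" "j \<in> I"
  shows "(\<Sum>l\<in>I. dag (s l i) * s l j) = (if i = j then p else 0)"
proof -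
  define m where "m l = (\<Sum>k\<in>I. dag (f k) * w k l)" for l
  have "p * m k = 0" if "k \<in> I" for k
  proof -
    have "p * dag (f l) = 0" if "l \<in> I" for l
      using arg_cong[of _ _ dag, OF fp[rule_format, OF that]] p(1) by simp
    then show ?thesis
      by (simp add: m_def sum_distrib_left mult.assoc[symmetric])
  qed
  then have ym: "y * y1 * m k * p = m k * p" if "k \<in> I" for k
    using inverse that by (simp add: m_def[symmetric] right_diff_distrib left_diff_distrib mult.assoc)
  \<comment> \<open>\<open>y1\<close> inverts \<open>y\<close> on the range of \<open>m k * p\<close>, so the \<open>y + dag y\<close> term cancels the middle two\<close>
  have cancel: "p * (dag (m i) * dag y1 * (y + dag y) * y1 * m j) * p
      = p * (dag (m i) * dag y1 * m j) * p + p * (dag (m i) * y1 * m j) * p"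
  proof -
    have "dag (y * y1 * m i * p) = dag (m i * p)"
      using ym[OF \<open>i \<in> I\<close>] by simp
    then have "p * dag (m i) * dag y1 * dag y * r = p * dag (m i) * r" for r
      using p(1) by (simp add: mult.assoc)
    then show ?thesis
      using ym[OF \<open>j \<in> I\<close>] by (simp add: algebra_simps)
  qed
  have "s k l = (w k l + f k * y1 * m l) * p" if "k \<in> I" for k l
    using that by (simp add: s m_def kronecker_sum_expand[OF \<open>finite I\<close>])
  then have "(\<Sum>l\<in>I. dag (s l i) * s l j)
      = p * (\<Sum>l\<in>I. dag (w l i + f l * y1 * m i) * (w l j + f l * y1 * m j)) * p"
    using p by (simp add: sum_distrib_left sum_distrib_right mult.assoc)
  also have "(\<Sum>l\<in>I. dag (w l i + f l * y1 * m i) * (w l j + f l * y1 * m j)) = (if i = j then 1 else 0)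
      + dag (m i) * y1 * m j + dag (m i) * dag y1 * m j - dag (m i) * dag y1 * (y + dag y) * y1 * m j"
    unfolding m_def orthonormal_columns_perturbation[OF cols \<open>i \<in> I\<close> \<open>j \<in> I\<close>] Y
    by simp
  also have "p * \<dots> * p = (if i = j then p else 0)"
    using cancel p by (simp add: algebra_simps)
  finally show ?thesis .
qed

theorem lemma2p5:
  fixes n :: nat
    and Kk :: "real \<Rightarrow> ('h::chilbert_space \<Rightarrow> 'h)"
    and Lk :: "real \<Rightarrow> nat \<Rightarrow> ('h \<Rightarrow> 'h)"
    and Sk :: "real \<Rightarrow> nat \<Rightarrow> nat \<Rightarrow> ('h \<Rightarrow> 'h)"
    and Y A B Y1inv P0 P1 K :: "'h \<Rightarrow> 'h"
    and F G L :: "nat \<Rightarrow> ('h \<Rightarrow> 'h)"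
    and W S :: "nat \<Rightarrow> nat \<Rightarrow> ('h \<Rightarrow> 'h)"
  assumes bdd: "bounded_op Y" "bounded_op A" "bounded_op B" "bounded_op Y1inv"
    and bddF: "\<forall>i\<in>{1..n}. bounded_op (F i)"
    and bddG: "\<forall>i\<in>{1..n}. bounded_op (G i)"
    and bddW: "\<forall>i\<in>{1..n}. \<forall>j\<in>{1..n}. bounded_op (W i j)"
    \<comment> \<open>Assumption 1\<close>
    and A1K: "\<forall>k\<ge>0. Kk k + adj (Kk k) = - (\<Sum>i\<in>{1..n}. adj (Lk k i) \<circ> Lk k i)"
    and A1S1: "\<forall>k\<ge>0. \<forall>i\<in>{1..n}. \<forall>j\<in>{1..n}.
                 (\<Sum>l\<in>{1..n}. Sk k i l \<circ> adj (Sk k j l)) = kdelta i j id"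
    and A1S2: "\<forall>k\<ge>0. \<forall>i\<in>{1..n}. \<forall>j\<in>{1..n}.
                 (\<Sum>l\<in>{1..n}. adj (Sk k l i) \<circ> Sk k l j) = kdelta i j id"
    \<comment> \<open>Assumption 2\<close>
    and A2K: "\<forall>k\<ge>0. Kk k = opscale (complex_of_real (k\<^sup>2)) Y + opscale (complex_of_real k) A + B"
    and A2L: "\<forall>k\<ge>0. \<forall>i\<in>{1..n}. Lk k i = opscale (complex_of_real k) (F i) + G i"
    and A2S: "\<forall>k\<ge>0. \<forall>i\<in>{1..n}. \<forall>j\<in>{1..n}. Sk k i j = W i j"
    \<comment> \<open>the projections\<close>
    and P0: "is_orth_proj P0 (opker Y)"
    and P1: "P1 = id - P0"
    \<comment> \<open>Assumption 3\<close>
    and A3comm: "P1 \<circ> Y1inv = Y1inv \<circ> P1"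
    and A3Z1: "Y \<circ> Y1inv \<circ> P1 \<circ> A \<circ> P0 = P1 \<circ> A \<circ> P0"
    and A3Z2: "\<forall>j\<in>{1..n}. Y \<circ> Y1inv \<circ> P1 \<circ> (\<Sum>i\<in>{1..n}. adj (F i) \<circ> W i j) \<circ> P0
                  = P1 \<circ> (\<Sum>i\<in>{1..n}. adj (F i) \<circ> W i j) \<circ> P0"
    and A3X: "\<forall>X \<in> {A, B} \<union> F ` {1..n} \<union> G ` {1..n}
                 \<union> {W i j |i j. i \<in> {1..n} \<and> j \<in> {1..n}}
                 \<union> {(\<Sum>i\<in>{1..n}. adj (G i) \<circ> W i j) |j. j \<in> {1..n}}
                 \<union> {F i \<circ> Y1inv \<circ> F j |i j. i \<in> {1..n} \<and> j \<in> {1..n}}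
                 \<union> {F i \<circ> Y1inv \<circ> A |i. i \<in> {1..n}}
                 \<union> {(\<Sum>l\<in>{1..n}. F i \<circ> Y1inv \<circ> adj (F l) \<circ> W l j) |i j. i \<in> {1..n} \<and> j \<in> {1..n}}
                 \<union> {A \<circ> Y1inv \<circ> A}
                 \<union> {A \<circ> Y1inv \<circ> F i |i. i \<in> {1..n}}
                 \<union> {(\<Sum>l\<in>{1..n}. A \<circ> Y1inv \<circ> adj (F l) \<circ> W l j) |j. j \<in> {1..n}}.
               P0 \<circ> X \<circ> P1 \<circ> Y1inv \<circ> Y = P0 \<circ> X \<circ> P1"
    and A3a: "P0 \<circ> Y \<circ> P1 = 0"
    and A3b: "P0 \<circ> A \<circ> P0 = 0"
    and A3c: "\<forall>i\<in>{1..n}. F i \<circ> P0 = 0"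
    and A3d: "\<forall>i\<in>{1..n}. \<forall>j\<in>{1..n}.
                P0 \<circ> (\<Sum>l\<in>{1..n}. (kdelta i l id + (F i \<circ> Y1inv \<circ> adj (F l))) \<circ> W l j) \<circ> P1 = 0"
    \<comment> \<open>definitions of K, L_i, S_ij\<close>
    and Kdef: "K = P0 \<circ> (B - (A \<circ> Y1inv \<circ> A)) \<circ> P0"
    and Ldef: "L = (\<lambda>i. (G i - (F i \<circ> Y1inv \<circ> A)) \<circ> P0)"
    and Sdef: "S = (\<lambda>i j. (\<Sum>l\<in>{1..n}. (kdelta i l id + (F i \<circ> Y1inv \<circ> adj (F l))) \<circ> W l j) \<circ> P0)"
    \<comment> \<open>Assumption 4\<close>
    and A4L: "\<forall>i\<in>{1..n}. P1 \<circ> L i = 0"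
    and A4S: "\<forall>i\<in>{1..n}. \<forall>j\<in>{1..n}. P1 \<circ> S i j = 0"
  shows "K + adj K = - (\<Sum>i\<in>{1..n}. adj (L i) \<circ> L i)
    \<and> (\<forall>i\<in>{1..n}. \<forall>j\<in>{1..n}. (\<Sum>l\<in>{1..n}. S i l \<circ> adj (S j l)) = kdelta i j P0)
    \<and> (\<forall>i\<in>{1..n}. \<forall>j\<in>{1..n}. (\<Sum>l\<in>{1..n}. adj (S l i) \<circ> S l j) = kdelta i j P0)"
proof -
  let ?I = "{1..n}"
  define y a b y1 p where "y = aop_of_fun Y" and "a = aop_of_fun A" and "b = aop_of_fun B"
    and "y1 = aop_of_fun Y1inv" and "p = aop_of_fun P0"
  define f g w where "f i = aop_of_fun (F i)" and "g i = aop_of_fun (G i)" and "w i j = aop_of_fun (W i j)"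
    for i j
  have lift: "fun_of_aop y = Y" "fun_of_aop a = A" "fun_of_aop b = B" "fun_of_aop y1 = Y1inv"
      "fun_of_aop p = P0"
    and lift_families: "\<And>i. i \<in> ?I \<Longrightarrow> fun_of_aop (f i) = F i" "\<And>i. i \<in> ?I \<Longrightarrow> fun_of_aop (g i) = G i"
      "\<And>i j. i \<in> ?I \<Longrightarrow> j \<in> ?I \<Longrightarrow> fun_of_aop (w i j) = W i j"
    using bdd bddF bddG bddW orth_proj_self_adjoint(1)[OF P0]
    by (simp_all add: y_def a_def b_def y1_def p_def f_def g_def w_def aop_of_fun_inverse bounded_op_has_adjoint)
  note to_fun = aop_eq_iff fun_of_aop_simps lift lift_families P1 kdelta_def
  have p: "dag p = p" "p * p = p"
    using orth_proj_self_adjoint(2)[OF P0] orth_proj_idempotent[OF P0] by (simp_all add: to_fun)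
  have rows: "\<forall>i\<in>?I. \<forall>j\<in>?I. (\<Sum>l\<in>?I. w i l * dag (w j l)) = (if i = j then 1 else 0)"
    and cols: "\<forall>i\<in>?I. \<forall>j\<in>?I. (\<Sum>l\<in>?I. dag (w l i) * w l j) = (if i = j then 1 else 0)"
    using A1S1[rule_format, of 0] A1S2[rule_format, of 0] A2S[rule_format, of 0] by (simp_all add: to_fun)
  have "\<forall>k::real\<ge>0. (k\<^sup>2 *\<^sub>R y + k *\<^sub>R a + b) + dag (k\<^sup>2 *\<^sub>R y + k *\<^sub>R a + b)
      = - (\<Sum>i\<in>?I. dag (k *\<^sub>R f i + g i) * (k *\<^sub>R f i + g i))"
    \<comment> \<open>\<open>dag\<close> must stay unexpanded here: \<open>adj\<close> of a sum is not simplified on the operator side\<close>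
    using A1K A2K A2L by (simp add: to_fun del: dag_simps)
  note coeffs = dissipation_coeffs[OF this]
  have fp: "\<forall>i\<in>?I. f i * p = 0"
    using A3c by (simp add: to_fun)
  have "p * (b - a * y1 * a) * p + dag (p * (b - a * y1 * a) * p)
      = - (\<Sum>i\<in>?I. dag ((g i - f i * y1 * a) * p) * ((g i - f i * y1 * a) * p))"
    by (rule reduced_dissipation_identity[OF coeffs _ _ fp p(1)]) (use A3Z1 A3b in \<open>simp_all add: to_fun\<close>)
  from arg_cong[OF this, of fun_of_aop]
  have K: "K + adj K = - (\<Sum>i\<in>?I. adj (L i) \<circ> L i)"
    by (simp add: Kdef Ldef fun_of_aop_simps lift lift_families del: dag_simps)
  define s where "s i j = (\<Sum>l\<in>?I. ((if i = l then 1 else 0) + f i * y1 * dag (f l)) * w l j) * p" for i j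
  have S: "S i j = fun_of_aop (s i j)" if "i \<in> ?I" "j \<in> ?I" for i j
    using that by (simp add: Sdef s_def fun_of_aop_simps lift lift_families kdelta_def)
  have "(\<Sum>l\<in>?I. s i l * dag (s j l)) = (if i = j then p else 0)" if "i \<in> ?I" "j \<in> ?I" for i j
  proof (rule reduced_scattering_rows_orthonormal[OF _ rows coeffs(1) fp p s_def _ _ _ that])
    have "\<forall>i\<in>?I. P0 \<circ> F i \<circ> P1 \<circ> Y1inv \<circ> Y = P0 \<circ> F i \<circ> P1"
      using A3X by blast
    then show "\<forall>i\<in>?I. p * f i * (1 - p) * y1 * y = p * f i * (1 - p)"
      by (simp add: to_fun)
  qed (use A3d A4S in \<open>simp_all add: S to_fun\<close>)
  moreover have "(\<Sum>l\<in>?I. dag (s l i) * s l j) = (if i = j then p else 0)" if "i \<in> ?I" "j \<in> ?I" for i j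
    by (rule reduced_scattering_columns_orthonormal[OF _ cols coeffs(1) fp p s_def _ that])
      (use A3Z2 in \<open>simp_all add: to_fun\<close>)
  ultimately show ?thesis
    using K by (simp add: S aop_eq_iff fun_of_aop_simps if_distrib[of fun_of_aop] lift kdelta_def)
qed

end
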